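(* For all integers $n$ and $\alpha$ such that $n+1\le\alpha\le (\frac n2)^2+\frac n2+1$ if $n$ is even, and $n+1\le\alpha\le(\frac{n-1}2)^2+n+1$ if $n$ is odd, there exists a minimal $n$-state nondeterministic finite automaton accepting a finite language over a binary alphabet whose equivalent minimal deterministic finite automaton has exactly $\alpha$ states.
   Context: NFAs have a single initial state and a transition function $\delta:Q\times\Sigma\to 2^Q$ that may map to the empty set (no sink state is needed or counted); DFAs are complete, so a sink state is counted. A minimal $n$-state NFA is an NFA with $n$ states such that no NFA with fewer states accepts the same language. *)

theory Defs
  imports Main
begin

text \<open>Binary alphabet: bool. Words: bool list.
  Automata with m states have state set {0..<m} (any finite state set can be relabelled).\<close>

text \<open>NFA: single initial state q0, transition function delta : Q x Sigma -> 2^Q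
  (possibly empty, no sink counted), final states F.\<close>
definition is_nfa :: "nat \<Rightarrow> nat \<Rightarrow> (nat \<Rightarrow> bool \<Rightarrow> nat set) \<Rightarrow> nat set \<Rightarrow> bool" where
  "is_nfa m q0 delta F \<longleftrightarrow> q0 < m \<and> F \<subseteq> {0..<m} \<and> (\<forall>q<m. \<forall>a. delta q a \<subseteq> {0..<m})"

fun nfa_run :: "(nat \<Rightarrow> bool \<Rightarrow> nat set) \<Rightarrow> nat set \<Rightarrow> bool list \<Rightarrow> nat set" where
  "nfa_run delta S [] = S"
| "nfa_run delta S (a # w) = nfa_run delta (\<Union>q\<in>S. delta q a) w"

definition nfa_lang :: "nat \<Rightarrow> (nat \<Rightarrow> bool \<Rightarrow> nat set) \<Rightarrow> nat set \<Rightarrow> bool list set" where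
  "nfa_lang q0 delta F = {w. nfa_run delta {q0} w \<inter> F \<noteq> {}}"

text \<open>Complete DFA (sink state counted).\<close>
definition is_dfa :: "nat \<Rightarrow> nat \<Rightarrow> (nat \<Rightarrow> bool \<Rightarrow> nat) \<Rightarrow> nat set \<Rightarrow> bool" where
  "is_dfa m q0 delta F \<longleftrightarrow> q0 < m \<and> F \<subseteq> {0..<m} \<and> (\<forall>q<m. \<forall>a. delta q a < m)"

definition dfa_lang :: "nat \<Rightarrow> (nat \<Rightarrow> bool \<Rightarrow> nat) \<Rightarrow> nat set \<Rightarrow> bool list set" where
  "dfa_lang q0 delta F = {w. foldl delta q0 w \<in> F}"

definition nfa_accepts_with :: "nat \<Rightarrow> bool list set \<Rightarrow> bool" where
  "nfa_accepts_with m L \<longleftrightarrow> (\<exists>q0 delta F. is_nfa m q0 delta F \<and> nfa_lang q0 delta F = L)"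

definition dfa_accepts_with :: "nat \<Rightarrow> bool list set \<Rightarrow> bool" where
  "dfa_accepts_with m L \<longleftrightarrow> (\<exists>q0 delta F. is_dfa m q0 delta F \<and> dfa_lang q0 delta F = L)"

definition minimal_nfa :: "nat \<Rightarrow> nat \<Rightarrow> (nat \<Rightarrow> bool \<Rightarrow> nat set) \<Rightarrow> nat set \<Rightarrow> bool" where
  "minimal_nfa n q0 delta F \<longleftrightarrow> is_nfa n q0 delta F \<and>
     (\<forall>m<n. \<not> nfa_accepts_with m (nfa_lang q0 delta F))"

definition min_dfa_states :: "bool list set \<Rightarrow> nat" where
  "min_dfa_states L = (LEAST m. dfa_accepts_with m L)"

end

theory Submission imports Defs begin

text \<open>Take the chain of states \<open>0, \<dots>, n - 1\<close> in which both letters advance by one, and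
  let \<open>True\<close> additionally skip ahead by two from every state below \<open>2r\<close> and from one more
  state \<open>q\<close>; the only final state is \<open>n - 1\<close>. The language is finite, and the words
  \<open>False\<^sup>i\<close> and \<open>False\<^sup>n\<^sup>-\<^sup>1\<^sup>-\<^sup>i\<close> form a fooling set of size \<open>n\<close>, so the automaton is a
  minimal NFA. After reading \<open>w\<close> the active states form an interval with lower end \<open>|w|\<close>;
  distinct intervals are separated by words \<open>False\<^sup>k\<close>, so the minimal DFA is the subset
  automaton. Counting the reachable intervals by width gives \<open>(r+1)(n-r) + (n-2-q)\<close>, plus one
  state for the empty set, and \<open>r\<close>, \<open>q\<close> can be chosen to attain every \<open>\<alpha>\<close> in the range.\<close>

abbreviation reachable_sets :: "(nat \<Rightarrow> bool \<Rightarrow> nat set) \<Rightarrow> nat \<Rightarrow> nat set set" where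
  "reachable_sets d q0 \<equiv> range (nfa_run d {q0})"

abbreviation nfa_lang_from :: "nat set \<Rightarrow> (nat \<Rightarrow> bool \<Rightarrow> nat set) \<Rightarrow> nat set \<Rightarrow> bool list set" where
  "nfa_lang_from S d F \<equiv> {w. nfa_run d S w \<inter> F \<noteq> {}}"

lemma nfa_run_append: "nfa_run d S (u @ v) = nfa_run d (nfa_run d S u) v"
  by (induction u arbitrary: S) auto

lemma nfa_run_UN: "nfa_run d S v = (\<Union>s\<in>S. nfa_run d {s} v)"
proof (induction v arbitrary: S)
  case Nil
  then show ?case by auto
next
  case (Cons a v)
  have "nfa_run d S (a # v) = (\<Union>x\<in>(\<Union>q\<in>S. d q a). nfa_run d {x} v)"
    using Cons.IH[of "\<Union>q\<in>S. d q a"] by simp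
  also have "\<dots> = (\<Union>s\<in>S. \<Union>x\<in>d s a. nfa_run d {x} v)" by blast
  also have "\<dots> = (\<Union>s\<in>S. nfa_run d {s} (a # v))"
    using Cons.IH[of "d _ a"] by simp
  finally show ?case .
qed

lemma nfa_run_subset:
  assumes "is_nfa m q0 d F" "S \<subseteq> {..<m}"
  shows "nfa_run d S w \<subseteq> {..<m}"
  using assms(2)
proof (induction w arbitrary: S)
  case Nil
  then show ?case by simp
next
  case (Cons a w)
  have "d q a \<subseteq> {..<m}" if "q \<in> S" for q
  proof -
    have "q < m" using Cons.prems that by auto
    then show ?thesis using assms(1) unfolding is_nfa_def by (simp add: atLeast0LessThan)
  qed
  then have "(\<Union>q\<in>S. d q a) \<subseteq> {..<m}" by blast
  then show ?case using Cons.IH by simp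
qed

lemma nfa_fooling_set:
  assumes "is_nfa m q0 d F" "nfa_lang q0 d F = L"
    and xy: "\<And>i. i < k \<Longrightarrow> x i @ y i \<in> L"
    and fooling: "\<And>i j. i < k \<Longrightarrow> j < k \<Longrightarrow> i \<noteq> j \<Longrightarrow> x i @ y j \<notin> L \<or> x j @ y i \<notin> L"
  shows "k \<le> m"
proof -
  have "\<exists>s. s \<in> nfa_run d {q0} (x i) \<and> nfa_run d {s} (y i) \<inter> F \<noteq> {}" if "i < k" for i
  proof -
    have "nfa_run d (nfa_run d {q0} (x i)) (y i) \<inter> F \<noteq> {}"
      using xy[OF that] assms(2) unfolding nfa_lang_def by (auto simp: nfa_run_append)
    then show ?thesis using nfa_run_UN[of d "nfa_run d {q0} (x i)" "y i"] by auto
  qed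
  then obtain s where s: "\<And>i. i < k \<Longrightarrow> s i \<in> nfa_run d {q0} (x i) \<and> nfa_run d {s i} (y i) \<inter> F \<noteq> {}"
    by metis
  have cross: "x i @ y j \<in> L" if "i < k" "j < k" "s i = s j" for i j
  proof -
    have "nfa_run d {s i} (y j) \<subseteq> nfa_run d {q0} (x i @ y j)"
      using s[OF that(1)] nfa_run_UN[of d "nfa_run d {q0} (x i)" "y j"]
      unfolding nfa_run_append by auto
    then show ?thesis using s[OF that(2)] that(3) assms(2) unfolding nfa_lang_def by auto
  qed
  have inj: "inj_on s {..<k}"
    by (rule inj_onI) (use fooling cross in fastforce)
  have "s ` {..<k} \<subseteq> {..<m}"
    using s nfa_run_subset[OF assms(1), of "{q0}"] assms(1) unfolding is_nfa_def by fastforce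
  from card_inj_on_le[OF inj this] show ?thesis by simp
qed

lemma card_quotients_le_dfa_states:
  assumes "is_dfa m q0 d F" "dfa_lang q0 d F = L"
  shows "card (range (\<lambda>u. {v. u @ v \<in> L})) \<le> m"
proof -
  have run_bound: "foldl d s w < m" if "s < m" for s w
    using that assms(1) unfolding is_dfa_def by (induction w arbitrary: s) auto
  have "range (\<lambda>u. {v. u @ v \<in> L}) \<subseteq> (\<lambda>s. {v. foldl d s v \<in> F}) ` {..<m}"
  proof
    fix A assume "A \<in> range (\<lambda>u. {v. u @ v \<in> L})"
    then obtain u where "A = {v. foldl d (foldl d q0 u) v \<in> F}"
      using assms(2) unfolding dfa_lang_def by auto
    moreover have "foldl d q0 u < m" using run_bound assms(1) unfolding is_dfa_def by auto
    ultimately show "A \<in> (\<lambda>s. {v. foldl d s v \<in> F}) ` {..<m}" by auto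
  qed
  then have "card (range (\<lambda>u. {v. u @ v \<in> L})) \<le> card ((\<lambda>s. {v. foldl d s v \<in> F}) ` {..<m})"
    by (intro card_mono) auto
  also have "\<dots> \<le> m" using card_image_le[of "{..<m}"] by auto
  finally show ?thesis .
qed

lemma dfa_accepts_with_card_reachable_sets:
  assumes "is_nfa n q0 d F"
  shows "dfa_accepts_with (card (reachable_sets d q0)) (nfa_lang q0 d F)"
proof -
  define Rs where "Rs = reachable_sets d q0"
  define K where "K = card Rs"
  have "Rs \<subseteq> Pow {..<n}"
    unfolding Rs_def using nfa_run_subset[OF assms, of "{q0}"] assms unfolding is_nfa_def by auto
  then have "finite Rs" using finite_subset by blast
  then obtain g where g: "bij_betw g {0..<K} Rs" using ex_bij_betw_nat_finite K_def by blast
  define idx where "idx = inv_into {0..<K} g"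
  have idx_less: "idx S < K" if "S \<in> Rs" for S
    using g that unfolding idx_def by (metis atLeastLessThan_iff bij_betw_def inv_into_into)
  have g_idx: "g (idx S) = S" if "S \<in> Rs" for S
    using g that unfolding idx_def by (meson bij_betw_inv_into_right)
  have g_in: "g i \<in> Rs" if "i < K" for i using g that unfolding bij_betw_def by auto
  have step_in: "(\<Union>q\<in>S. d q c) \<in> Rs" if "S \<in> Rs" for S c
  proof -
    obtain u where "S = nfa_run d {q0} u" using \<open>S \<in> Rs\<close> unfolding Rs_def by auto
    then have "(\<Union>q\<in>S. d q c) = nfa_run d {q0} (u @ [c])" by (simp add: nfa_run_append)
    then show ?thesis unfolding Rs_def by auto
  qed
  define d' where "d' = (\<lambda>i c. if i < K then idx (\<Union>q\<in>g i. d q c) else 0)"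
  define F' where "F' = {i. i < K \<and> g i \<inter> F \<noteq> {}}"
  have run_in: "nfa_run d S w \<in> Rs" if "S \<in> Rs" for S w
    using that step_in by (induction w arbitrary: S) auto
  have foldl_idx: "foldl d' (idx S) w = idx (nfa_run d S w)" if "S \<in> Rs" for S w
    using that
  proof (induction w arbitrary: S)
    case Nil
    then show ?case by simp
  next
    case (Cons c w)
    have "d' (idx S) c = idx (\<Union>q\<in>S. d q c)" using Cons.prems idx_less g_idx d'_def by simp
    then show ?case using Cons step_in by simp
  qed
  have q0_in: "{q0} \<in> Rs" unfolding Rs_def by (metis nfa_run.simps(1) rangeI)
  have "is_dfa K (idx {q0}) d' F'"
    unfolding is_dfa_def using idx_less[OF q0_in] d'_def idx_less g_in step_in F'_def by auto
  moreover have "dfa_lang (idx {q0}) d' F' = nfa_lang q0 d F"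
    unfolding dfa_lang_def nfa_lang_def F'_def
    using foldl_idx[OF q0_in] run_in[OF q0_in] idx_less g_idx by auto
  ultimately show ?thesis unfolding dfa_accepts_with_def K_def Rs_def by blast
qed

lemma min_dfa_states_eq_card_reachable_sets:
  assumes "is_nfa n q0 d F"
    and distinguishable: "inj_on (\<lambda>S. nfa_lang_from S d F) (reachable_sets d q0)"
  shows "min_dfa_states (nfa_lang q0 d F) = card (reachable_sets d q0)"
proof -
  let ?L = "nfa_lang q0 d F"
  have "range (\<lambda>u. {v. u @ v \<in> ?L}) = (\<lambda>S. nfa_lang_from S d F) ` reachable_sets d q0"
    unfolding nfa_lang_def by (auto simp: nfa_run_append)
  then have card_quotients: "card (range (\<lambda>u. {v. u @ v \<in> ?L})) = card (reachable_sets d q0)"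
    using card_image[OF distinguishable] by simp
  have "card (reachable_sets d q0) \<le> m" if "dfa_accepts_with m ?L" for m
    using that card_quotients_le_dfa_states card_quotients unfolding dfa_accepts_with_def by metis
  then show ?thesis
    unfolding min_dfa_states_def
    using dfa_accepts_with_card_reachable_sets[OF assms(1)] by (intro Least_equality) auto
qed

definition skip_chain :: "nat \<Rightarrow> nat \<Rightarrow> nat \<Rightarrow> nat \<Rightarrow> bool \<Rightarrow> nat set" where
  "skip_chain n r q i c = {j. j = Suc i \<and> j < n} \<union> {j. c \<and> (i < 2*r \<or> i = q) \<and> j = i + 2 \<and> j < n}"

text \<open>Upper end of the active interval; its lower end after reading \<open>w\<close> is \<open>length w\<close>.\<close>
definition skip_top :: "nat \<Rightarrow> nat \<Rightarrow> bool \<Rightarrow> nat \<Rightarrow> nat" where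
  "skip_top r q c h = (if c \<and> (h < 2*r \<or> h = q) then h + 2 else Suc h)"

definition skip_top_run :: "nat \<Rightarrow> nat \<Rightarrow> nat \<Rightarrow> bool list \<Rightarrow> nat" where
  "skip_top_run r q h w = foldl (\<lambda>h c. skip_top r q c h) h w"

definition chain_interval :: "nat \<Rightarrow> nat \<Rightarrow> nat \<Rightarrow> nat set" where
  "chain_interval n l h = {i. l \<le> i \<and> i \<le> h \<and> i < n}"

lemma skip_chain_step:
  assumes "l \<le> h"
  shows "(\<Union>i\<in>chain_interval n l h. skip_chain n r q i c) = chain_interval n (Suc l) (skip_top r q c h)"
proof (rule set_eqI, rule iffI)
  fix j assume "j \<in> (\<Union>i\<in>chain_interval n l h. skip_chain n r q i c)"
  then obtain i where "i \<in> chain_interval n l h" "j \<in> skip_chain n r q i c" by auto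
  then show "j \<in> chain_interval n (Suc l) (skip_top r q c h)"
    unfolding chain_interval_def skip_chain_def skip_top_def by (cases "i = h") auto
next
  fix j assume j: "j \<in> chain_interval n (Suc l) (skip_top r q c h)"
  show "j \<in> (\<Union>i\<in>chain_interval n l h. skip_chain n r q i c)"
  proof (cases "j \<le> Suc h")
    case True
    then have "j - 1 \<in> chain_interval n l h" "j \<in> skip_chain n r q (j - 1) c"
      using j unfolding chain_interval_def skip_chain_def by auto
    then show ?thesis by blast
  next
    case False
    then have "j = h + 2" "c" "h < 2*r \<or> h = q"
      using j unfolding chain_interval_def skip_top_def by (auto split: if_splits)
    then have "h \<in> chain_interval n l h" "j \<in> skip_chain n r q h c"
      using j assms unfolding chain_interval_def skip_chain_def by auto
    then show ?thesis by blast
  qed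
qed

lemma skip_chain_run_interval:
  "l \<le> h \<Longrightarrow> nfa_run (skip_chain n r q) (chain_interval n l h) w
     = chain_interval n (l + length w) (skip_top_run r q h w)"
proof (induction w arbitrary: l h)
  case Nil
  then show ?case by (simp add: skip_top_run_def)
next
  case (Cons c w)
  have "Suc l \<le> skip_top r q c h" using Cons.prems unfolding skip_top_def by auto
  then show ?case
    using skip_chain_step[OF Cons.prems] Cons.IH by (simp add: skip_top_run_def)
qed

lemma skip_chain_run:
  "1 \<le> n \<Longrightarrow> nfa_run (skip_chain n r q) {0} w = chain_interval n (length w) (skip_top_run r q 0 w)"
proof -
  assume "1 \<le> n"
  then have "{0} = chain_interval n 0 0" unfolding chain_interval_def by auto
  then show ?thesis using skip_chain_run_interval[of 0 0 n r q w] by simp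
qed

lemma skip_chain_run_False:
  assumes "S \<subseteq> {..<n}"
  shows "nfa_run (skip_chain n r q) S (replicate k False) = {j. \<exists>i\<in>S. j = i + k \<and> j < n}"
  using assms
proof (induction k arbitrary: S)
  case 0
  then show ?case by auto
next
  case (Suc k)
  have "(\<Union>i\<in>S. skip_chain n r q i False) = {j. \<exists>i\<in>S. j = Suc i \<and> j < n}"
    unfolding skip_chain_def by auto
  then have "nfa_run (skip_chain n r q) S (replicate (Suc k) False)
      = {j. \<exists>i\<in>{j. \<exists>i\<in>S. j = Suc i \<and> j < n}. j = i + k \<and> j < n}"
    using Suc.IH[of "{j. \<exists>i\<in>S. j = Suc i \<and> j < n}"] by auto
  then show ?case by auto
qed

lemma is_nfa_skip_chain: "1 \<le> n \<Longrightarrow> is_nfa n 0 (skip_chain n r q) {n - 1}"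
  unfolding is_nfa_def skip_chain_def by auto

lemma skip_chain_accepts_replicate_False:
  "1 \<le> n \<Longrightarrow> replicate k False \<in> nfa_lang 0 (skip_chain n r q) {n - 1} \<longleftrightarrow> k = n - 1"
  unfolding nfa_lang_def using skip_chain_run_False[of "{0}" n r q k] by auto

lemma finite_skip_chain_lang: "1 \<le> n \<Longrightarrow> finite (nfa_lang 0 (skip_chain n r q) {n - 1})"
proof -
  assume "1 \<le> n"
  then have "nfa_lang 0 (skip_chain n r q) {n - 1} \<subseteq> {w. set w \<subseteq> UNIV \<and> length w \<le> n}"
    unfolding nfa_lang_def using skip_chain_run by (auto simp: chain_interval_def)
  then show ?thesis
    using finite_lists_length_le[of "UNIV :: bool set" n] finite_subset by auto
qed

lemma minimal_nfa_skip_chain: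
  assumes "1 \<le> n"
  shows "minimal_nfa n 0 (skip_chain n r q) {n - 1}"
  unfolding minimal_nfa_def
proof (intro conjI allI impI notI is_nfa_skip_chain[OF assms])
  fix m assume "m < n" "nfa_accepts_with m (nfa_lang 0 (skip_chain n r q) {n - 1})"
  then obtain q0 d F where A: "is_nfa m q0 d F" "nfa_lang q0 d F = nfa_lang 0 (skip_chain n r q) {n - 1}"
    unfolding nfa_accepts_with_def by blast
  have app: "replicate i False @ replicate (n - 1 - j) False = replicate (i + (n - 1 - j)) False" for i j
    by (simp add: replicate_add)
  have "n \<le> m"
  proof (rule nfa_fooling_set[OF A, of n "\<lambda>i. replicate i False" "\<lambda>i. replicate (n - 1 - i) False"])
    fix i assume "i < n"
    then show "replicate i False @ replicate (n - 1 - i) False \<in> nfa_lang 0 (skip_chain n r q) {n - 1}"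
      unfolding app skip_chain_accepts_replicate_False[OF assms] by simp
  next
    fix i j assume "i < n" "j < n" "i \<noteq> j"
    then show "replicate i False @ replicate (n - 1 - j) False \<notin> nfa_lang 0 (skip_chain n r q) {n - 1}
        \<or> replicate j False @ replicate (n - 1 - i) False \<notin> nfa_lang 0 (skip_chain n r q) {n - 1}"
      unfolding app skip_chain_accepts_replicate_False[OF assms] by simp
  qed
  then show False using \<open>m < n\<close> by simp
qed

lemma skip_chain_distinguishable:
  assumes "1 \<le> n"
  shows "inj_on (\<lambda>S. nfa_lang_from S (skip_chain n r q) {n - 1}) (reachable_sets (skip_chain n r q) 0)"
proof (rule inj_onI)
  fix S S'
  assume S: "S \<in> reachable_sets (skip_chain n r q) 0" and S': "S' \<in> reachable_sets (skip_chain n r q) 0"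
    and eq: "nfa_lang_from S (skip_chain n r q) {n - 1} = nfa_lang_from S' (skip_chain n r q) {n - 1}"
  have below_n: "T \<subseteq> {..<n}" if "T \<in> reachable_sets (skip_chain n r q) 0" for T
    using that nfa_run_subset[OF is_nfa_skip_chain[OF assms], of "{0}"] assms by auto
  have mem: "i \<in> T \<longleftrightarrow> replicate (n - 1 - i) False \<in> nfa_lang_from T (skip_chain n r q) {n - 1}"
    if "T \<subseteq> {..<n}" "i < n" for T i
  proof -
    have "(\<exists>i'\<in>T. n - 1 = i' + (n - 1 - i)) \<longleftrightarrow> (\<exists>i'\<in>T. i' = i)"
      by (rule bex_cong) (use that(2) in arith)+
    then show ?thesis using skip_chain_run_False[OF that(1)] assms by auto
  qed
  show "S = S'"
  proof (rule set_eqI)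
    fix i
    show "i \<in> S \<longleftrightarrow> i \<in> S'"
    proof (cases "i < n")
      case True
      then show ?thesis using mem[OF below_n[OF S] True] mem[OF below_n[OF S'] True] eq by blast
    next
      case False
      then show ?thesis using below_n[OF S] below_n[OF S'] by auto
    qed
  qed
qed

text \<open>Skips below \<open>2r\<close> widen the interval to at most \<open>min l r\<close>; the one skip from \<open>q\<close>
  adds exactly one more, and only once \<open>l \<ge> q + 1 - r\<close>.\<close>
definition skip_shape :: "nat \<Rightarrow> nat \<Rightarrow> nat \<Rightarrow> nat \<Rightarrow> bool" where
  "skip_shape r q l m \<longleftrightarrow> l \<le> m \<and> ((m - l \<le> l \<and> m - l \<le> r) \<or> (m - l = Suc r \<and> q + 1 - r \<le> l))"

lemma skip_shape_run:
  "2*r \<le> q \<Longrightarrow> skip_shape r q l h \<Longrightarrow> skip_shape r q (l + length w) (skip_top_run r q h w)"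
proof (induction w arbitrary: l h)
  case Nil
  then show ?case by (simp add: skip_top_run_def)
next
  case (Cons c w)
  have "skip_shape r q (Suc l) (skip_top r q c h)"
    using Cons.prems unfolding skip_shape_def skip_top_def by (auto split: if_splits)
  from Cons.IH[OF Cons.prems(1) this] show ?case by (simp add: skip_top_run_def)
qed

lemma skip_top_run_append: "skip_top_run r q h (u @ v) = skip_top_run r q (skip_top_run r q h u) v"
  by (simp add: skip_top_run_def)

lemma skip_top_run_False: "skip_top_run r q h (replicate k False) = h + k"
  by (induction k arbitrary: h) (auto simp: skip_top_run_def skip_top_def)

lemma skip_top_run_True: "i + k \<le> r \<Longrightarrow> skip_top_run r q (2*i) (replicate k True) = 2*(i + k)"
proof (induction k arbitrary: i)
  case 0
  then show ?case by (simp add: skip_top_run_def)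
next
  case (Suc k)
  have "skip_top_run r q (2*i) (replicate (Suc k) True) = skip_top_run r q (2*Suc i) (replicate k True)"
    using Suc.prems by (simp add: skip_top_run_def skip_top_def)
  also have "\<dots> = 2*(Suc i + k)" by (rule Suc.IH) (use Suc.prems in simp)
  finally show ?case by simp
qed

lemma skip_shape_reachable:
  assumes "2*r \<le> q" "skip_shape r q l m"
  shows "\<exists>w. length w = l \<and> skip_top_run r q 0 w = m"
  using assms(2) unfolding skip_shape_def
proof (elim conjE disjE)
  assume "l \<le> m" "m - l \<le> l" "m - l \<le> r"
  define w where "w = replicate (m - l) True @ replicate (l - (m - l)) False"
  have "skip_top_run r q 0 w = 2*(m - l) + (l - (m - l))"
    unfolding w_def skip_top_run_append using skip_top_run_True[of 0 "m - l" r q] \<open>m - l \<le> r\<close>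
    by (simp add: skip_top_run_False)
  also have "\<dots> = m" using \<open>l \<le> m\<close> \<open>m - l \<le> l\<close> by arith
  finally have "skip_top_run r q 0 w = m" .
  moreover have "length w = l" using \<open>m - l \<le> l\<close> by (simp add: w_def)
  ultimately show ?thesis by blast
next
  assume "l \<le> m" "m - l = Suc r" "q + 1 - r \<le> l"
  define w where "w = replicate r True @ replicate (q - 2*r) False @ [True] @ replicate (l - (q + 1 - r)) False"
  have "skip_top_run r q 0 (replicate r True) = 2*r" using skip_top_run_True[of 0 r r q] by simp
  moreover have "skip_top_run r q q [True] = q + 2" by (simp add: skip_top_run_def skip_top_def)
  ultimately have "skip_top_run r q 0 w = q + 2 + (l - (q + 1 - r))"
    using assms(1) unfolding w_def skip_top_run_append by (simp add: skip_top_run_False)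
  moreover have "length w = l" using assms(1) \<open>q + 1 - r \<le> l\<close> by (simp add: w_def)
  ultimately show ?thesis using \<open>l \<le> m\<close> \<open>m - l = Suc r\<close> \<open>q + 1 - r \<le> l\<close> assms(1) by (intro exI[of _ w]) auto
qed

definition skip_pairs :: "nat \<Rightarrow> nat \<Rightarrow> nat \<Rightarrow> (nat \<times> nat) set" where
  "skip_pairs n r q = {(l, m). m < n \<and> skip_shape r q l m}"

lemma reachable_sets_skip_chain:
  assumes "1 \<le> n" "2*r \<le> q"
  shows "reachable_sets (skip_chain n r q) 0 = insert {} ((\<lambda>(l, m). {l..m}) ` skip_pairs n r q)"
proof (rule set_eqI, rule iffI)
  fix S assume "S \<in> reachable_sets (skip_chain n r q) 0"
  then obtain w where S: "S = chain_interval n (length w) (skip_top_run r q 0 w)"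
    using skip_chain_run[OF assms(1)] by auto
  have shape: "skip_shape r q (length w) (skip_top_run r q 0 w)"
    using skip_shape_run[OF assms(2), of 0 0 w] by (simp add: skip_shape_def)
  show "S \<in> insert {} ((\<lambda>(l, m). {l..m}) ` skip_pairs n r q)"
  proof (cases "length w < n")
    case False
    then have "S = {}" using S unfolding chain_interval_def by auto
    then show ?thesis by simp
  next
    case True
    let ?m = "min (skip_top_run r q 0 w) (n - 1)"
    have "S = {length w..?m}" using S True unfolding chain_interval_def by auto
    moreover have "(length w, ?m) \<in> skip_pairs n r q"
      using shape True assms unfolding skip_shape_def skip_pairs_def by auto
    ultimately show ?thesis by force
  qed
next
  fix S assume "S \<in> insert {} ((\<lambda>(l, m). {l..m}) ` skip_pairs n r q)"
  then consider "S = {}" | l m where "(l, m) \<in> skip_pairs n r q" "S = {l..m}" by auto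
  then show "S \<in> reachable_sets (skip_chain n r q) 0"
  proof cases
    case 1
    have "nfa_run (skip_chain n r q) {0} (replicate n False) = {}"
      using skip_chain_run[OF assms(1)] unfolding chain_interval_def by auto
    then show ?thesis using 1 by (metis rangeI)
  next
    case 2
    then obtain w where w: "length w = l" "skip_top_run r q 0 w = m"
      using skip_shape_reachable[OF assms(2)] unfolding skip_pairs_def by auto
    have "m < n" using 2(1) unfolding skip_pairs_def by auto
    then have "nfa_run (skip_chain n r q) {0} w = S"
      using skip_chain_run[OF assms(1)] w 2(2) unfolding chain_interval_def by auto
    then show ?thesis by (metis rangeI)
  qed
qed

lemma sum_atMost_diff_double: "2*r < (n::nat) \<Longrightarrow> (\<Sum>e\<le>r. n - 2*e) = (r + 1)*(n - r)"
proof (induction r)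
  case 0
  then show ?case by simp
next
  case (Suc r)
  then have "(\<Sum>e\<le>Suc r. n - 2*e) = (r + 1)*(n - r) + (n - 2*Suc r)" by simp
  also have "\<dots> = (Suc r + 1)*(n - Suc r)"
  proof -
    define s where "s = n - (2*Suc r + 1)"
    have "n = 2*Suc r + 1 + s" using Suc.prems unfolding s_def by simp
    then show ?thesis by (simp add: algebra_simps)
  qed
  finally show ?case .
qed

lemma card_skip_pairs:
  assumes "2*r < n" "2*r \<le> q"
  shows "card (skip_pairs n r q) = (r + 1)*(n - r) + (n - 2 - q)"
proof -
  define layer where "layer = (\<lambda>e. (\<lambda>l. (l, l + e)) ` {e..n - 1 - e})"
  define wide where "wide = (\<lambda>l. (l, l + Suc r)) ` {q + 1 - r..n - 2 - r}"
  have pairs_eq: "skip_pairs n r q = (\<Union>e\<le>r. layer e) \<union> wide"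
  proof (rule set_eqI)
    fix p :: "nat \<times> nat"
    obtain l m where p: "p = (l, m)" by (cases p)
    show "p \<in> skip_pairs n r q \<longleftrightarrow> p \<in> (\<Union>e\<le>r. layer e) \<union> wide"
    proof
      assume "p \<in> skip_pairs n r q"
      then have k: "m < n" "l \<le> m" "(m - l \<le> l \<and> m - l \<le> r) \<or> (m - l = Suc r \<and> q + 1 - r \<le> l)"
        unfolding skip_pairs_def skip_shape_def p by auto
      from k(3) show "p \<in> (\<Union>e\<le>r. layer e) \<union> wide"
      proof
        assume a: "m - l \<le> l \<and> m - l \<le> r"
        have "(l, m) \<in> layer (m - l)" unfolding layer_def using k a
          by (intro image_eqI[of _ _ l]) auto
        then show ?thesis using a p by blast
      next
        assume a: "m - l = Suc r \<and> q + 1 - r \<le> l"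
        have "(l, m) \<in> wide" unfolding wide_def using k a
          by (intro image_eqI[of _ _ l]) auto
        then show ?thesis using p by blast
      qed
    next
      assume "p \<in> (\<Union>e\<le>r. layer e) \<union> wide"
      then show "p \<in> skip_pairs n r q"
        unfolding p layer_def wide_def skip_pairs_def skip_shape_def using assms by auto
    qed
  qed
  have card_layer: "card (layer e) = n - 2*e" if "e \<le> r" for e
  proof -
    have "card (layer e) = card {e..n - 1 - e}" unfolding layer_def by (rule card_image) (auto intro: inj_onI)
    then show ?thesis using that assms by simp
  qed
  have "layer i \<inter> layer j = {}" if "i \<noteq> j" for i j using that unfolding layer_def by auto
  then have "card (\<Union>e\<le>r. layer e) = (\<Sum>e\<le>r. n - 2*e)"
    using card_UN_disjoint[of "{..r}" layer] card_layer unfolding layer_def by auto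
  moreover have "card wide = n - 2 - q"
  proof -
    have "card wide = card {q + 1 - r..n - 2 - r}" unfolding wide_def by (rule card_image) (auto intro: inj_onI)
    then show ?thesis using assms by simp
  qed
  moreover have "card (skip_pairs n r q) = card (\<Union>e\<le>r. layer e) + card wide"
    unfolding pairs_eq by (rule card_Un_disjoint) (auto simp: layer_def wide_def)
  ultimately show ?thesis using sum_atMost_diff_double[OF assms(1)] by simp
qed

lemma card_reachable_sets_skip_chain:
  assumes "1 \<le> n" "2*r < n" "2*r \<le> q"
  shows "card (reachable_sets (skip_chain n r q) 0) = (r + 1)*(n - r) + (n - 2 - q) + 1"
proof -
  have "finite (skip_pairs n r q)"
    by (rule finite_subset[of _ "{..<n} \<times> {..<n}"]) (auto simp: skip_pairs_def skip_shape_def)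
  moreover have ordered: "skip_pairs n r q \<subseteq> {(l, m). l \<le> m}"
    by (auto simp: skip_pairs_def skip_shape_def)
  moreover have "inj_on (\<lambda>(l, m). {l..m::nat}) {(l, m). l \<le> m}"
    by (rule inj_onI) auto
  ultimately have "card ((\<lambda>(l, m). {l..m}) ` skip_pairs n r q) = card (skip_pairs n r q)"
    and "finite ((\<lambda>(l, m). {l..m}) ` skip_pairs n r q)"
    using card_image inj_on_subset by blast+
  moreover have "{} \<notin> (\<lambda>(l, m). {l..m}) ` skip_pairs n r q"
    using ordered by auto
  ultimately show ?thesis
    unfolding reachable_sets_skip_chain[OF assms(1,3)] card_skip_pairs[OF assms(2,3)]
    by simp
qed

lemma skip_chain_dfa_states:
  assumes "1 \<le> n" "2*r < n" "2*r \<le> q"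
  shows "dfa_accepts_with ((r + 1)*(n - r) + (n - 2 - q) + 1) (nfa_lang 0 (skip_chain n r q) {n - 1})"
    and "min_dfa_states (nfa_lang 0 (skip_chain n r q) {n - 1}) = (r + 1)*(n - r) + (n - 2 - q) + 1"
  using dfa_accepts_with_card_reachable_sets[OF is_nfa_skip_chain[OF assms(1), of r q]]
    min_dfa_states_eq_card_reachable_sets[OF is_nfa_skip_chain[OF assms(1), of r q]
      skip_chain_distinguishable[OF assms(1), of r q]]
  unfolding card_reachable_sets_skip_chain[OF assms] .

text \<open>Consecutive products \<open>r (n - 1 - r)\<close> differ by \<open>n - 2 - 2r\<close>, so every number up to
  \<open>R (n - 1 - R)\<close> is such a product plus a remainder below the next gap.\<close>
lemma excess_decomposition:
  "2*R < (n::nat) \<Longrightarrow> E \<le> R*(n - 1 - R) \<Longrightarrow>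
    \<exists>r t. r \<le> R \<and> E = r*(n - 1 - r) + t \<and> (t = 0 \<or> 2*r + t \<le> n - 2)"
proof (induction R arbitrary: E)
  case 0
  then show ?case by simp
next
  case (Suc R)
  show ?case
  proof (cases "E \<le> R*(n - 1 - R)")
    case True
    then obtain r t where "r \<le> R" "E = r*(n - 1 - r) + t" "t = 0 \<or> 2*r + t \<le> n - 2"
      using Suc.IH[of E] Suc.prems(1) True by auto
    then show ?thesis by (intro exI[of _ r] exI[of _ t]) auto
  next
    case False
    define s where "s = n - (2*Suc R + 1)"
    have n: "n = 2*Suc R + 1 + s" using Suc.prems unfolding s_def by simp
    have "Suc R*(n - 1 - Suc R) = R*(n - 1 - R) + (n - 2 - 2*R)" unfolding n by (simp add: algebra_simps)
    then show ?thesis using False Suc.prems(2) n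
      by (intro exI[of _ R] exI[of _ "E - R*(n - 1 - R)"]) auto
  qed
qed

lemma dfa_size_decomposition:
  fixes n \<alpha> :: nat
  assumes "n \<ge> 1"
    and "n + 1 \<le> \<alpha>"
    and "even n \<Longrightarrow> \<alpha> \<le> (n div 2)^2 + n div 2 + 1"
    and "odd n \<Longrightarrow> \<alpha> \<le> ((n - 1) div 2)^2 + n + 1"
  shows "\<exists>r t. 2*r < n \<and> (t = 0 \<or> 2*r + t \<le> n - 2) \<and> \<alpha> = (r + 1)*(n - r) + t + 1"
proof -
  define R where "R = (n - 1) div 2"
  have "2*R < n" using assms(1) unfolding R_def by linarith
  moreover have "\<alpha> - (n + 1) \<le> R*(n - 1 - R)"
  proof (cases "even n")
    case True
    then obtain m where "n = 2*m" by blast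
    moreover obtain k where "m = Suc k" using \<open>n = 2*m\<close> assms(1) by (cases m) auto
    ultimately have k: "n = 2*Suc k" by simp
    then have "\<alpha> \<le> (Suc k)^2 + Suc k + 1" using assms(3)[OF True] by simp
    moreover have "(Suc k)^2 + Suc k + 1 = k * Suc k + (n + 1)" unfolding k by (simp add: power2_eq_square)
    moreover have "R = k" "n - 1 - k = Suc k" using k unfolding R_def by simp_all
    ultimately show ?thesis by (simp add: mult.commute)
  next
    case False
    then obtain k where k: "n = 2*k + 1" using oddE by blast
    then have "\<alpha> \<le> k^2 + n + 1" using assms(4)[OF False] by simp
    moreover have "R = k" "n - 1 - k = k" using k unfolding R_def by simp_all
    ultimately show ?thesis by (simp add: power2_eq_square)
  qed
  ultimately obtain r t where rt: "r \<le> R" "\<alpha> - (n + 1) = r*(n - 1 - r) + t" "t = 0 \<or> 2*r + t \<le> n - 2"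
    using excess_decomposition by blast
  have "2*r < n" using rt(1) \<open>2*R < n\<close> by simp
  moreover have "(r + 1)*(n - r) = n + r*(n - 1 - r)"
  proof -
    define s where "s = n - (r + 1)"
    have "n = r + 1 + s" using \<open>2*r < n\<close> unfolding s_def by simp
    then show ?thesis by (simp add: algebra_simps)
  qed
  ultimately show ?thesis using rt(2,3) assms(2) by (intro exI[of _ r] exI[of _ t]) auto
qed

theorem mainTheorem10:
  fixes n \<alpha> :: nat
  assumes "n \<ge> 1"
    and "n + 1 \<le> \<alpha>"
    and "even n \<Longrightarrow> \<alpha> \<le> (n div 2)^2 + n div 2 + 1"
    and "odd n \<Longrightarrow> \<alpha> \<le> ((n - 1) div 2)^2 + n + 1"
  shows "\<exists>q0 delta F. minimal_nfa n q0 delta F \<and> finite (nfa_lang q0 delta F)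
           \<and> dfa_accepts_with \<alpha> (nfa_lang q0 delta F)
           \<and> min_dfa_states (nfa_lang q0 delta F) = \<alpha>"
proof -
  obtain r t where r: "2*r < n" and t: "t = 0 \<or> 2*r + t \<le> n - 2"
    and \<alpha>: "\<alpha> = (r + 1)*(n - r) + t + 1"
    using dfa_size_decomposition[OF assms] by blast
  \<comment> \<open>For \<open>q = n - 1\<close> the extra skip would leave the chain, so it adds no interval.\<close>
  define q where "q = (if t = 0 then n - 1 else n - 2 - t)"
  have q: "2*r \<le> q" "n - 2 - q = t" using r t unfolding q_def by auto
  show ?thesis
    using minimal_nfa_skip_chain[OF assms(1)] finite_skip_chain_lang[OF assms(1)]
      skip_chain_dfa_states[OF assms(1) r q(1)]
    unfolding \<alpha> q(2) by blast
qed

end
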